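(* Let $g\geq 2$, $h$ and $t\ge 1$ be integers with $h>g^t(g-1)$. Then there exists a partition $\mathbb{N}=W_0\cup\cdots\cup W_{h-1}$ (into pairwise disjoint sets) such that each set $W_r$ ($0\le r\le h-1$) contains infinitely many intervals of at least $t$ consecutive integers, and every integer $n\geq h$ belongs to $hA_g(W_0)$, i.e. every integer $n\ge h$ can be written as $n=a_1+\cdots+a_h$ with $a_1,\dots,a_h\in A_g(W_0)$.
   Context: $\mathbb{N}$ denotes the set of all nonnegative integers. For a nonempty $W\subseteq\mathbb{N}$ and an integer $g\ge 2$, $A_g(W)$ is the set of all numbers of the form $\sum_{f\in F}a_f g^f$, where $F$ is a finite nonempty subset of $W$ and $1\le a_f\le g-1$ for each $f\in F$. For a set $B\subseteq \mathbb{N}$, $hB$ denotes the set of all sums $b_1+\cdots+b_h$ with $b_1,\dots,b_h\in B$ (repetitions allowed). *)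

theory Defs
  imports Main
begin

definition A_set :: "nat \<Rightarrow> nat set \<Rightarrow> nat set" where
  "A_set g W = {n. \<exists>F a. finite F \<and> F \<noteq> {} \<and> F \<subseteq> W \<and>
       (\<forall>f\<in>F. 1 \<le> a f \<and> a f \<le> g - 1) \<and> n = (\<Sum>f\<in>F. a f * g ^ f)}"

definition sumset :: "nat \<Rightarrow> nat set \<Rightarrow> nat set" where
  "sumset h B = {n. \<exists>b. (\<forall>i<h. b i \<in> B) \<and> n = (\<Sum>i<h. b i)}"

end

(*
  W_0 consists of the blocks [(2t+1)k, (2t+1)k + t] of t + 1 consecutive integers; the gaps
  between them, blocks of t integers, are distributed cyclically among W_1, ..., W_(h-1).

  Let S_p be the sum of g^q over q in W_0 with q < p.  A number m <= h(g-1) S_p is split greedily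
  from the top: at a position p in W_0 take the least j with m - j g^p <= h(g-1) S_p, spread these
  j units as digits <= g - 1 over the h summands, and recurse on the remainder.  To end up with h
  nonzero summands, the remainder must still be at least h - 1 whenever j > 0, which follows from
  g^p + h <= h(g-1) S_p + 2.  Inside a block this is immediate; at the start of a block the
  preceding block of length t + 1 ends t positions earlier, and the inequality reduces to g^t < h.
*)
theory Submission
  imports Defs "HOL-Library.Infinite_Set"
begin

lemma A_set_mono: "X \<subseteq> Y \<Longrightarrow> A_set g X \<subseteq> A_set g Y"
  unfolding A_set_def by blast

lemma A_set_add_digit:
  assumes b: "b \<in> insert 0 (A_set g X)" and X: "X \<subseteq> {..<p}" and x: "x \<le> g - 1"
  shows "b + x * g ^ p \<in> insert 0 (A_set g (insert p X))"
proof (cases "x = 0")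
  case True
  then show ?thesis using b A_set_mono[of X "insert p X" g] by auto
next
  case False
  show ?thesis
  proof (cases "b = 0")
    case True
    then show ?thesis unfolding A_set_def using False x
      by (intro insertI2 CollectI exI[of _ "{p}"] exI[of _ "\<lambda>_. x"]) auto
  next
    case False
    then obtain F a where F: "finite F" "F \<noteq> {}" "F \<subseteq> X" "\<forall>f\<in>F. 1 \<le> a f \<and> a f \<le> g - 1"
        "b = (\<Sum>f\<in>F. a f * g ^ f)"
      using b unfolding A_set_def by auto
    have "p \<notin> F" using F(3) X by auto
    then have "b + x * g ^ p = (\<Sum>f\<in>insert p F. (a(p := x)) f * g ^ f)"
      using F(1,5) by (auto intro!: sum.cong)
    then show ?thesis unfolding A_set_def using F \<open>p \<notin> F\<close> x \<open>x \<noteq> 0\<close>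
      by (intro insertI2 CollectI exI[of _ "insert p F"] exI[of _ "a(p := x)"]) auto
  qed
qed

definition padded_sum :: "nat \<Rightarrow> nat \<Rightarrow> nat set \<Rightarrow> nat \<Rightarrow> bool" where
  "padded_sum h k B m \<longleftrightarrow>
     (\<exists>b. (\<forall>i<h. b i \<in> insert 0 B) \<and> (\<forall>i<k. b i \<noteq> 0) \<and> m = (\<Sum>i<h. b i))"

lemma padded_sum_zero: "padded_sum h 0 B 0"
  unfolding padded_sum_def by (intro exI[of _ "\<lambda>_. 0"]) simp

lemma mem_sumset_if_padded_sum: "padded_sum h h B m \<Longrightarrow> m \<in> sumset h B"
  unfolding padded_sum_def sumset_def by blast

lemma padded_sum_mono: "padded_sum h k B m \<Longrightarrow> B \<subseteq> C \<Longrightarrow> padded_sum h k C m"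
  unfolding padded_sum_def by blast

lemma padded_sum_add_digits:
  assumes "padded_sum h (k - j) (A_set g X) r" "X \<subseteq> {..<p}" "k \<le> h"
    and "\<forall>i<h. x i \<le> g - 1" "\<forall>i\<in>{k - j..<k}. 1 \<le> x i" "(\<Sum>i<h. x i) = j"
  shows "padded_sum h k (A_set g (insert p X)) (r + j * g ^ p)"
proof -
  obtain b where b: "\<forall>i<h. b i \<in> insert 0 (A_set g X)" "\<forall>i<k - j. b i \<noteq> 0" "r = (\<Sum>i<h. b i)"
    using assms(1) unfolding padded_sum_def by blast
  have "\<forall>i<h. b i + x i * g ^ p \<in> insert 0 (A_set g (insert p X))"
    using A_set_add_digit b(1) assms(2,4) by blast
  moreover have "b i + x i * g ^ p \<noteq> 0" if "i < k" for i
  proof (cases "i < k - j")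
    case True
    then show ?thesis using b(2) by simp
  next
    case False
    then have "1 \<le> x i" using assms(5) that by simp
    moreover have "x i \<le> g - 1" using assms(3,4) that by simp
    ultimately have "0 < g" by linarith
    with \<open>1 \<le> x i\<close> show ?thesis by simp
  qed
  moreover have "r + j * g ^ p = (\<Sum>i<h. b i + x i * g ^ p)"
    using b(3) assms(6) by (simp add: sum.distrib sum_distrib_right[symmetric])
  ultimately show ?thesis
    unfolding padded_sum_def by (intro exI[of _ "\<lambda>i. b i + x i * g ^ p"]) blast
qed

lemma sum_eq_between_bounds:
  fixes l u :: "'a \<Rightarrow> nat"
  assumes "finite I" "\<forall>i\<in>I. l i \<le> u i" "sum l I \<le> j" "j \<le> sum u I"
  shows "\<exists>x. (\<forall>i\<in>I. l i \<le> x i \<and> x i \<le> u i) \<and> sum x I = j"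
  using assms
proof (induction I arbitrary: j rule: finite_induct)
  case empty
  then show ?case by simp
next
  case (insert i I)
  define y where "y = min (u i) (j - sum l I)"
  have "sum l I \<le> j - y" "j - y \<le> sum u I" "l i \<le> y" "y \<le> u i" "y \<le> j"
    using insert.hyps insert.prems sum_mono[of I l u] by (auto simp: y_def)
  then obtain x where x: "\<forall>k\<in>I. l k \<le> x k \<and> x k \<le> u k" "sum x I = j - y"
    using insert.IH insert.prems(1) by blast
  have "sum (x(i := y)) I = sum x I"
    using insert.hyps(2) by (intro sum.cong) auto
  then have "sum (x(i := y)) (insert i I) = j"
    using insert.hyps x(2) \<open>y \<le> j\<close> by simp
  then show ?case using x(1) insert.hyps \<open>l i \<le> y\<close> \<open>y \<le> u i\<close> by (intro exI[of _ "x(i := y)"]) auto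
qed

lemma digits_with_sum:
  fixes g h j :: nat
  assumes "2 \<le> g" "j \<le> h * (g - 1)" "S \<subseteq> {..<h}" "card S \<le> j"
  obtains x where "\<forall>i<h. x i \<le> g - 1" "\<forall>i\<in>S. 1 \<le> x i" "(\<Sum>i<h. x i) = j"
proof -
  have "(\<Sum>i<h. of_bool (i \<in> S) :: nat) = card ({..<h} \<inter> S)"
    by (metis sum_of_bool_eq finite_lessThan Collect_mem_eq of_nat_id)
  also have "\<dots> = card S" using assms(3) by (simp add: Int_absorb1)
  finally have "(\<Sum>i<h. of_bool (i \<in> S) :: nat) \<le> j" using assms(4) by linarith
  moreover have "\<forall>i<h. of_bool (i \<in> S) \<le> g - 1" using assms(1) by auto
  moreover have "j \<le> (\<Sum>_<h. g - 1)" using assms(2) by (simp add: mult.commute)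
  ultimately obtain x where "\<forall>i<h. of_bool (i \<in> S) \<le> x i \<and> x i \<le> g - 1" "(\<Sum>i<h. x i) = j"
    using sum_eq_between_bounds[of "{..<h}" "\<lambda>i. of_bool (i \<in> S)" "\<lambda>_. g - 1" j] by auto
  then show ?thesis using assms(3) by (intro that; fastforce)
qed

lemma least_digit_count:
  fixes m V v M :: nat
  assumes "0 < v" "v \<le> V + 1" "m \<le> V + M * v"
  obtains j where "j \<le> M" "j * v \<le> m" "m - j * v \<le> V" "0 < j \<Longrightarrow> V < m - j * v + v"
proof -
  define j where "j = (LEAST j. m - j * v \<le> V)"
  have "m - M * v \<le> V" using assms(3) by simp
  then have "j \<le> M" "m - j * v \<le> V" unfolding j_def by (auto intro: Least_le LeastI)
  moreover have "j * v \<le> m \<and> V < m - j * v + v" if "0 < j"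
  proof -
    have "\<not> m - (j - 1) * v \<le> V"
      using not_less_Least[of "j - 1" "\<lambda>j. m - j * v \<le> V"] that by (simp add: j_def)
    moreover have "j * v = (j - 1) * v + v" using that by (simp add: mult_eq_if)
    ultimately show ?thesis using assms(2) by linarith
  qed
  ultimately show ?thesis using that by fastforce
qed

definition prefix_weight :: "nat \<Rightarrow> nat set \<Rightarrow> nat \<Rightarrow> nat" where
  "prefix_weight g W p = (\<Sum>q\<in>W \<inter> {..<p}. g ^ q)"

text \<open>The number \<open>h * (g - 1) * prefix_weight g W p\<close> is the largest sum of \<open>h\<close> elements of
  \<open>A_set g (W \<inter> {..<p})\<close>; the condition says that it exceeds \<open>g ^ p - 1\<close> by at least \<open>h - 1\<close>.\<close>

definition small_gaps :: "nat \<Rightarrow> nat \<Rightarrow> nat set \<Rightarrow> bool" where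
  "small_gaps g h W \<longleftrightarrow>
     (\<forall>p\<in>W. 0 < p \<longrightarrow> g ^ p + h \<le> h * (g - 1) * prefix_weight g W p + 2)"

lemma prefix_weight_0 [simp]: "prefix_weight g W 0 = 0"
  by (simp add: prefix_weight_def)

lemma prefix_weight_Suc:
  "prefix_weight g W (Suc p) = (if p \<in> W then prefix_weight g W p + g ^ p else prefix_weight g W p)"
proof -
  have "W \<inter> {..<Suc p} = (if p \<in> W then insert p (W \<inter> {..<p}) else W \<inter> {..<p})"
    by (auto simp: less_Suc_eq)
  then show ?thesis by (simp add: prefix_weight_def)
qed

lemma padded_sum_prefix_Suc:
  assumes g: "2 \<le> g" and h: "0 < h" and gaps: "small_gaps g h W" and "p \<in> W"
    and IH: "\<And>k m. k \<le> h \<Longrightarrow> k \<le> m \<Longrightarrow> m \<le> h * (g - 1) * prefix_weight g W p \<Longrightarrow>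
      padded_sum h k (A_set g (W \<inter> {..<p})) m"
    and "k \<le> h" "k \<le> m" "m \<le> h * (g - 1) * prefix_weight g W (Suc p)"
  shows "padded_sum h k (A_set g (W \<inter> {..<Suc p})) m"
proof -
  define v where "v = g ^ p"
  define V where "V = h * (g - 1) * prefix_weight g W p"
  have "0 < v" using g by (simp add: v_def)
  have gap: "v + h \<le> V + 2" if "0 < p"
    using gaps \<open>p \<in> W\<close> that by (simp add: small_gaps_def v_def V_def)
  have "v \<le> V + 1" using gap h by (cases "p = 0") (auto simp: v_def V_def)
  moreover have "m \<le> V + h * (g - 1) * v"
    using assms(8) \<open>p \<in> W\<close> by (simp add: prefix_weight_Suc V_def v_def algebra_simps)
  ultimately obtain j where j: "j \<le> h * (g - 1)" "j * v \<le> m" "m - j * v \<le> V"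
      "0 < j \<Longrightarrow> V < m - j * v + v"
    using least_digit_count[OF \<open>0 < v\<close>] by blast
  txt \<open>The \<open>j\<close> units at position \<open>p\<close> serve the summands \<open>k - j, ..., k - 1\<close>; if \<open>j > 0\<close>, the
    gap condition leaves a remainder of at least \<open>h - 1 \<ge> k - j\<close> for the others.\<close>
  have "k - j \<le> m - j * v"
  proof (cases "0 < j \<and> 0 < p")
    case True
    then show ?thesis using gap j(4) \<open>k \<le> h\<close> by auto
  next
    case False
    then show ?thesis using j \<open>k \<le> m\<close> by (auto simp: V_def v_def)
  qed
  then have "padded_sum h (k - j) (A_set g (W \<inter> {..<p})) (m - j * v)"
    using IH \<open>k \<le> h\<close> j(3) unfolding V_def by simp
  moreover have "{k - j..<k} \<subseteq> {..<h}" "card {k - j..<k} \<le> j" using \<open>k \<le> h\<close> by auto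
  then obtain x where "\<forall>i<h. x i \<le> g - 1" "\<forall>i\<in>{k - j..<k}. 1 \<le> x i" "(\<Sum>i<h. x i) = j"
    using digits_with_sum[OF g j(1)] by blast
  ultimately have "padded_sum h k (A_set g (insert p (W \<inter> {..<p}))) (m - j * v + j * g ^ p)"
    using padded_sum_add_digits \<open>k \<le> h\<close> by blast
  moreover have "W \<inter> {..<Suc p} = insert p (W \<inter> {..<p})" using \<open>p \<in> W\<close> by (auto simp: less_Suc_eq)
  ultimately show ?thesis using j(2) by (simp add: v_def)
qed

lemma padded_sum_prefix:
  assumes g: "2 \<le> g" and h: "0 < h" and gaps: "small_gaps g h W"
  shows "k \<le> h \<Longrightarrow> k \<le> m \<Longrightarrow> m \<le> h * (g - 1) * prefix_weight g W p \<Longrightarrow>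
    padded_sum h k (A_set g (W \<inter> {..<p})) m"
proof (induction p arbitrary: k m)
  case 0
  then show ?case using padded_sum_zero by simp
next
  case (Suc p)
  show ?case
  proof (cases "p \<in> W")
    case False
    then have "W \<inter> {..<Suc p} = W \<inter> {..<p}" by (auto simp: less_Suc_eq)
    then show ?thesis using Suc False by (simp add: prefix_weight_Suc)
  next
    case True
    then show ?thesis using padded_sum_prefix_Suc[OF g h gaps] Suc.IH Suc.prems by blast
  qed
qed

lemma mem_sumset_A_set_if_small_gaps:
  assumes g: "2 \<le> g" and h: "0 < h" and gaps: "small_gaps g h W" and "infinite W" and "h \<le> n"
  shows "n \<in> sumset h (A_set g W)"
proof -
  obtain p where "p \<in> W" "n \<le> p" using \<open>infinite W\<close> by (meson infinite_nat_iff_unbounded_le)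
  have "n < 2 ^ p" using \<open>n \<le> p\<close> less_exp[of p] by linarith
  also have "2 ^ p \<le> g ^ p" using g by (simp add: power_mono)
  also have "g ^ p \<le> prefix_weight g W (Suc p)" using \<open>p \<in> W\<close> by (simp add: prefix_weight_Suc)
  also have "\<dots> \<le> h * (g - 1) * prefix_weight g W (Suc p)"
    using g h by (simp add: Suc_le_eq)
  finally have "padded_sum h h (A_set g (W \<inter> {..<Suc p})) n"
    using padded_sum_prefix[OF g h gaps order.refl \<open>h \<le> n\<close>] by simp
  then show ?thesis using padded_sum_mono[OF _ A_set_mono] mem_sumset_if_padded_sum by blast
qed

lemma geometric_block_sum:
  fixes g :: nat
  assumes "1 \<le> g"
  shows "(g - 1) * (\<Sum>q\<in>{c..<c + l}. g ^ q) + g ^ c = g ^ (c + l)"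
proof (induction l)
  case (Suc l)
  have "(g - 1) * g ^ (c + l) + g ^ (c + l) = g ^ (c + Suc l)" using assms by (simp add: mult_eq_if)
  then show ?case using Suc by (simp add: distrib_left)
qed simp

lemma block_gap_inequality:
  fixes s D L h :: nat
  assumes "1 \<le> s" "1 \<le> D" "2 * D \<le> L" "D < h"
  shows "s * L * D + h \<le> h * (s * L - s) + 2"
proof -
  define X where "X = s * L - s - 1"
  have sL: "s * (2 * D) \<le> s * L" using assms(3) by simp
  have "s * 2 \<le> s * (2 * D)" using assms(2) by simp
  then have "s + 1 \<le> s * L" using sL assms(1) by linarith
  then have "int X = int s * int L - int s - 1" by (simp add: X_def of_nat_diff)
  txt \<open>Given \<open>2 * D \<le> L\<close>, the bound \<open>s * L * D \<le> (D + 1) * X + 2\<close> reduces to \<open>(s - 1) * (D - 1) \<ge> 0\<close>.\<close>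
  moreover have "0 \<le> (int s - 1) * (int D - 1)" using assms(1,2) by simp
  moreover have "int s * (2 * int D) \<le> int s * int L"
    using sL by (metis of_nat_le_iff of_nat_mult of_nat_numeral)
  ultimately have "int (s * L * D) \<le> (int D + 1) * (int s * int L - int s - 1) + 2"
    by (simp add: algebra_simps)
  then have "int (s * L * D) \<le> int ((D + 1) * X + 2)"
    by (simp only: of_nat_add of_nat_mult of_nat_1 of_nat_numeral \<open>int X = _\<close>)
  then have "s * L * D \<le> (D + 1) * X + 2" by (simp only: of_nat_le_iff)
  also have "(D + 1) * X \<le> h * X" using assms(4) by (intro mult_right_mono) auto
  finally have "s * L * D + h \<le> h * (X + 1) + 2" by simp
  also have "X + 1 = s * L - s" using \<open>s + 1 \<le> s * L\<close> by (simp add: X_def)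
  finally show ?thesis .
qed

lemma small_gap_after_block:
  assumes g: "2 \<le> g" and "d < l" "g ^ d < h" "{c..<c + l} \<subseteq> W"
  shows "g ^ (c + l + d) + h \<le> h * (g - 1) * prefix_weight g W (c + l + d) + 2"
proof -
  have "(\<Sum>q\<in>{c..<c + l}. g ^ q) \<le> prefix_weight g W (c + l + d)"
    unfolding prefix_weight_def using assms(4) by (intro sum_mono2) auto
  moreover have "(g - 1) * (\<Sum>q\<in>{c..<c + l}. g ^ q) + g ^ c = g ^ c * g ^ l"
    using geometric_block_sum[of g c l] g by (simp add: power_add)
  ultimately have "h * (g ^ c * g ^ l - g ^ c) \<le> h * (g - 1) * prefix_weight g W (c + l + d)"
    by (metis add_diff_cancel_right' mult.assoc mult_le_mono2)
  moreover have "g * g ^ d \<le> g ^ l" using g \<open>d < l\<close> power_increasing[of "Suc d" l g] by simp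
  then have "2 * g ^ d \<le> g ^ l" using mult_le_mono1[OF g, of "g ^ d"] by linarith
  then have "g ^ c * g ^ l * g ^ d + h \<le> h * (g ^ c * g ^ l - g ^ c) + 2"
    using g \<open>g ^ d < h\<close> by (intro block_gap_inequality) auto
  moreover have "g ^ (c + l + d) = g ^ c * g ^ l * g ^ d" by (simp add: power_add)
  ultimately show ?thesis by linarith
qed

definition long_blocks :: "nat \<Rightarrow> nat set" where
  "long_blocks t = {p. p mod (2 * t + 1) \<le> t}"

lemma mem_long_blocks_iff:
  "e < 2 * t + 1 \<Longrightarrow> (2 * t + 1) * k + e \<in> long_blocks t \<longleftrightarrow> e \<le> t"
  by (simp only: long_blocks_def mem_Collect_eq mod_mult_self4 mod_less)

lemma interval_subset_long_blocks:
  assumes "s \<le> t + 1"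
  shows "{(2 * t + 1) * k..<(2 * t + 1) * k + s} \<subseteq> long_blocks t"
proof
  fix q assume q: "q \<in> {(2 * t + 1) * k..<(2 * t + 1) * k + s}"
  define e where "e = q - (2 * t + 1) * k"
  have "q = (2 * t + 1) * k + e" "e \<le> t" using q assms by (auto simp: e_def)
  then show "q \<in> long_blocks t" using mem_long_blocks_iff[of e t k] by simp
qed

lemma infinite_long_blocks: "infinite (long_blocks t)"
  unfolding infinite_nat_iff_unbounded_le
proof
  fix N
  have "(2 * t + 1) * N \<in> long_blocks t" using mem_long_blocks_iff[of 0 t N] by simp
  then show "\<exists>n\<ge>N. n \<in> long_blocks t" by (intro exI[of _ "(2 * t + 1) * N"]) auto
qed

lemma small_gaps_long_blocks:
  assumes g: "2 \<le> g" and "g ^ t < h"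
  shows "small_gaps g h (long_blocks t)"
  unfolding small_gaps_def
proof (intro ballI impI)
  fix p assume "p \<in> long_blocks t" "0 < p"
  define k e where "k = p div (2 * t + 1)" and "e = p mod (2 * t + 1)"
  have p: "p = (2 * t + 1) * k + e" "e \<le> t"
    using \<open>p \<in> long_blocks t\<close> div_mult_mod_eq[of p "2 * t + 1"]
    by (simp_all add: k_def e_def long_blocks_def mult.commute)
  show "g ^ p + h \<le> h * (g - 1) * prefix_weight g (long_blocks t) p + 2"
  proof (cases "e = 0")
    case False
    have "1 \<le> g ^ t" using g by simp
    then have "g ^ 0 < h" using \<open>g ^ t < h\<close> by simp
    moreover have "{(2 * t + 1) * k..<(2 * t + 1) * k + e} \<subseteq> long_blocks t"
      using p(2) by (intro interval_subset_long_blocks) simp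
    ultimately have "g ^ ((2 * t + 1) * k + e + 0) + h
        \<le> h * (g - 1) * prefix_weight g (long_blocks t) ((2 * t + 1) * k + e + 0) + 2"
      using False by (intro small_gap_after_block[OF g]) auto
    then show ?thesis by (simp only: p(1) add_0_right)
  next
    case True
    then obtain k' where "k = Suc k'" using \<open>0 < p\<close> p by (cases k) auto
    then have p': "p = (2 * t + 1) * k' + (t + 1) + t" using True p by simp
    have "{(2 * t + 1) * k'..<(2 * t + 1) * k' + (t + 1)} \<subseteq> long_blocks t"
      by (rule interval_subset_long_blocks) simp
    then have "g ^ ((2 * t + 1) * k' + (t + 1) + t) + h
        \<le> h * (g - 1) * prefix_weight g (long_blocks t) ((2 * t + 1) * k' + (t + 1) + t) + 2"
      using \<open>g ^ t < h\<close> by (intro small_gap_after_block[OF g]) auto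
    then show ?thesis by (simp only: p')
  qed
qed

definition block_colour :: "nat \<Rightarrow> nat \<Rightarrow> nat \<Rightarrow> nat" where
  "block_colour t h p =
     (if p \<in> long_blocks t then 0 else Suc (p div (2 * t + 1) mod (h - 1)))"

lemma block_colour_less:
  assumes "1 < h"
  shows "block_colour t h p < h"
proof -
  define x where "x = p div (2 * t + 1) mod (h - 1)"
  have "x < h - 1" using assms by (simp add: x_def)
  then have "Suc x < h" by linarith
  then show ?thesis unfolding block_colour_def x_def[symmetric] by simp
qed

lemma block_colour_eq:
  assumes "e < 2 * t + 1"
  shows "block_colour t h ((2 * t + 1) * k + e) = (if e \<le> t then 0 else Suc (k mod (h - 1)))"
  using assms mem_long_blocks_iff[OF assms]
  by (simp only: block_colour_def div_mult_self4 div_less) simp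

lemma infinite_intervals_block_colour:
  assumes "1 < h" "r < h"
  shows "infinite {m. {m..<m + t} \<subseteq> {p. block_colour t h p = r}}"
  unfolding infinite_nat_iff_unbounded_le
proof
  fix N
  define k where "k = (if r = 0 then N else (h - 1) * N + (r - 1))"
  define s where "s = (if r = 0 then 0 else t + 1)"
  have "1 * N \<le> (h - 1) * N" using assms(1) by (intro mult_le_mono1) linarith
  then have "N \<le> (h - 1) * N + (r - 1)" by linarith
  then have "N \<le> k" by (cases r) (simp_all add: k_def)
  have colour: "block_colour t h ((2 * t + 1) * k + e) = r" if "s \<le> e" "e < s + t" for e
  proof (cases "r = 0")
    case True
    then have "e \<le> t" using that by (simp add: s_def)
    then show ?thesis using block_colour_eq[of e t h k] True by simp
  next
    case False
    then have "t < e" "e < 2 * t + 1" using that by (simp_all add: s_def)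
    moreover have "k mod (h - 1) = r - 1"
    proof -
      have "k = (r - 1) + (h - 1) * N" using False by (simp add: k_def)
      moreover have "r - 1 < h - 1" using False assms(2) by linarith
      ultimately show ?thesis by simp
    qed
    ultimately show ?thesis using block_colour_eq[of e t h k] False by simp
  qed
  have "{(2 * t + 1) * k + s..<(2 * t + 1) * k + s + t} \<subseteq> {p. block_colour t h p = r}"
  proof
    fix q assume q: "q \<in> {(2 * t + 1) * k + s..<(2 * t + 1) * k + s + t}"
    define e where "e = q - (2 * t + 1) * k"
    have "q = (2 * t + 1) * k + e" "s \<le> e" "e < s + t" using q by (auto simp: e_def)
    then show "q \<in> {p. block_colour t h p = r}" using colour by simp
  qed
  moreover have "k \<le> (2 * t + 1) * k" by simp
  then have "N \<le> (2 * t + 1) * k + s" using \<open>N \<le> k\<close> by linarith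
  ultimately show "\<exists>m\<ge>N. m \<in> {m. {m..<m + t} \<subseteq> {p. block_colour t h p = r}}" by blast
qed

theorem theorem2:
  fixes g h t :: nat
  assumes "g \<ge> 2" and "t \<ge> 1" and "h > g ^ t * (g - 1)"
  shows "\<exists>W :: nat \<Rightarrow> nat set.
     (\<Union>r<h. W r) = UNIV \<and>
     (\<forall>r<h. \<forall>s<h. r \<noteq> s \<longrightarrow> W r \<inter> W s = {}) \<and>
     (\<forall>r<h. infinite {m. {m..<m + t} \<subseteq> W r}) \<and>
     (\<forall>n\<ge>h. n \<in> sumset h (A_set g (W 0)))"
proof -
  have "g ^ t \<le> g ^ t * (g - 1)" using assms(1) by simp
  then have "g ^ t < h" using assms(3) by linarith
  moreover have "1 \<le> g ^ t" using assms(1) by simp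
  ultimately have "1 < h" by linarith
  define W where "W r = {p. block_colour t h p = r}" for r
  have cover: "(\<Union>r<h. W r) = UNIV" using block_colour_less[OF \<open>1 < h\<close>] by (auto simp: W_def)
  have disjoint: "\<forall>r<h. \<forall>s<h. r \<noteq> s \<longrightarrow> W r \<inter> W s = {}" by (auto simp: W_def)
  have intervals: "\<forall>r<h. infinite {m. {m..<m + t} \<subseteq> W r}"
    unfolding W_def using infinite_intervals_block_colour[OF \<open>1 < h\<close>] by blast
  have "W 0 = long_blocks t" by (auto simp: W_def block_colour_def)
  moreover have "\<forall>n\<ge>h. n \<in> sumset h (A_set g (long_blocks t))"
    using mem_sumset_A_set_if_small_gaps[OF assms(1) _ small_gaps_long_blocks[OF assms(1) \<open>g ^ t < h\<close>]
        infinite_long_blocks] \<open>1 < h\<close> by simp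
  ultimately have sums: "\<forall>n\<ge>h. n \<in> sumset h (A_set g (W 0))" by simp
  show ?thesis by (intro exI[of _ W] conjI cover disjoint intervals sums)
qed

end
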